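(* Let $I$ and $J$ be finite sets, let $g\in\mathbb{R}^J$, and for each $i\in I$ let $x^0_i\in\mathbb{R}^J$ and let $u_i:\mathbb{R}^J\to\mathbb{R}\cup\{-\infty\}$ be upper semicontinuous and concave with $u_i(x_i+rg)>u_i(x_i)$ for all $x_i\in\mathrm{dom}\,u_i$ and all $r>0$. Assume moreover that whenever $x\in\mathbb{R}^{I\times J}$ satisfies $u_i^\infty(x_i)\ge 0$ for all $i\in I$ and $\sum_{i\in I}x_i=0$, then $x=0$. Define $D_i(x_i):=\sup\{r\in\mathbb{R}\mid u_i(x^0_i+x_i-rg)\ge u_i(x^0_i)\}$. Then the problem \[ \text{maximize } \sum_{i\in I}D_i(x_i)\ \text{ over } x\in\mathbb{R}^{I\times J}\ \text{ subject to } \sum_{i\in I}x_i=0 \] admits an optimal solution.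
   Context: $\mathrm{dom}\,u_i=\{x\in\mathbb{R}^J\mid u_i(x)>-\infty\}$. The recession function of the upper semicontinuous concave function $u_i$ is $u_i^\infty(x_i):=\inf_{\alpha>0}\frac{u_i(\bar x_i+\alpha x_i)-u_i(\bar x_i)}{\alpha}$ for any $\bar x_i\in\mathrm{dom}\,u_i$ (independent of the choice of $\bar x_i$). $x^0_i$ is agent $i$'s endowment, $g$ the numeraire portfolio, and $D_i$ agent $i$'s indifference-price function; the optimization problem is the (double auction) market clearing problem. *)

theory Defs
  imports "HOL-Analysis.Analysis"
begin

definition edom :: "('a \<Rightarrow> ereal) \<Rightarrow> 'a set" where
  "edom u = {x. u x > -\<infinity>}"

definition usc :: "('a::topological_space \<Rightarrow> ereal) \<Rightarrow> bool" where
  "usc u \<longleftrightarrow> (\<forall>c::ereal. closed {x. c \<le> u x})"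

definition concave_ereal :: "('a::real_vector \<Rightarrow> ereal) \<Rightarrow> bool" where
  "concave_ereal u \<longleftrightarrow> convex {(x, r::real). ereal r \<le> u x}"

definition recession :: "('a::real_vector \<Rightarrow> ereal) \<Rightarrow> 'a \<Rightarrow> ereal" where
  "recession u x = (let xb = (SOME xb. xb \<in> edom u) in
     (INF \<alpha>\<in>{0<..}. (u (xb + \<alpha> *\<^sub>R x) - u xb) / ereal \<alpha>))"

definition indiff_price :: "('a::real_vector \<Rightarrow> ereal) \<Rightarrow> 'a \<Rightarrow> 'a \<Rightarrow> 'a \<Rightarrow> ereal" where
  "indiff_price u x0 g x = (SUP r\<in>{r::real. u (x0 + x - r *\<^sub>R g) \<ge> u x0}. ereal r)"

end

theory Submission
  imports Defs
begin

text \<open>Let \<open>C\<^sub>i = {z. u\<^sub>i x\<^sup>0\<^sub>i \<le> u\<^sub>i (x\<^sup>0\<^sub>i + z)}\<close> be the closed convex acceptance set of agent \<open>i\<close>.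
  Up to sharing numeraire among the agents, maximising \<open>\<Sum>\<^sub>i D\<^sub>i\<close> over balanced trades
  amounts to maximising \<open>s\<close> over the set \<open>K\<close> of pairs \<open>(z, s)\<close> with \<open>z\<^sub>i \<in> C\<^sub>i\<close>,
  \<open>\<Sum>\<^sub>i z\<^sub>i + s g = 0\<close> and \<open>s \<ge> 0\<close>. The set \<open>K\<close> is closed and convex, and it is bounded:
  a recession direction \<open>(d, s)\<close> of \<open>K\<close> gives the directions \<open>d\<^sub>i + (s / |I|) g\<close>, which have
  nonnegative recession and sum zero, hence vanish, and then \<open>s > 0\<close> would make a
  strictly negative amount of numeraire acceptable. So \<open>s\<close> attains its maximum on the
  compact \<open>K\<close>. This needs every endowment in the domain; otherwise \<open>D\<^sub>i \<equiv> \<infinity>\<close>, and a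
  balanced trade of total price \<open>\<infinity>\<close> is trivially optimal.\<close>

lemma unbounded_closed_convex_contains_ray:
  fixes S :: "'a::euclidean_space set"
  assumes "closed S" and "convex S" and "0 \<in> S" and "\<not> bounded S"
  obtains d where "d \<noteq> 0" and "\<And>t. 0 \<le> t \<Longrightarrow> t *\<^sub>R d \<in> S"
proof -
  have "\<exists>x\<in>S. real (Suc n) \<le> norm x" for n
    using \<open>\<not> bounded S\<close> unfolding bounded_iff by (meson nle_le)
  then obtain f where f: "\<And>n. f n \<in> S" "\<And>n. real (Suc n) \<le> norm (f n)"
    by metis
  have "sgn (f n) \<in> sphere 0 1" for n
    using f(2)[of n] by (auto simp: norm_sgn)
  then obtain d r where r: "strict_mono r" and lim: "(sgn \<circ> f \<circ> r) \<longlonglongrightarrow> d" and d: "d \<in> sphere 0 1"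
    using compact_sphere[of "0::'a" 1] unfolding compact_def by (metis comp_apply)
  have "t *\<^sub>R d \<in> S" if t: "0 < t" for t
  proof (rule Lim_in_closed_set[OF \<open>closed S\<close>])
    show "((\<lambda>n. t *\<^sub>R (sgn \<circ> f \<circ> r) n) \<longlongrightarrow> t *\<^sub>R d) sequentially"
      by (intro tendsto_intros lim)
    obtain N :: nat where N: "t \<le> real N"
      using real_arch_simple by blast
    show "\<forall>\<^sub>F n in sequentially. t *\<^sub>R (sgn \<circ> f \<circ> r) n \<in> S"
      unfolding eventually_sequentially
    proof (intro exI allI impI)
      fix n
      assume "N \<le> n"
      then have "t \<le> norm (f (r n))"
        using seq_suble[OF r, of n] f(2)[of "r n"] N by linarith
      then have "(1 - t / norm (f (r n))) *\<^sub>R 0 + (t / norm (f (r n))) *\<^sub>R f (r n) \<in> S"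
        using t by (intro convexD[OF \<open>convex S\<close> \<open>0 \<in> S\<close> f(1)]) (auto simp: divide_le_eq_1)
      then show "t *\<^sub>R (sgn \<circ> f \<circ> r) n \<in> S"
        by (simp add: sgn_div_norm divide_inverse)
    qed
  qed simp
  then have "t *\<^sub>R d \<in> S" if "0 \<le> t" for t
    using that \<open>0 \<in> S\<close> by (cases "t = 0") auto
  moreover have "d \<noteq> 0"
    using d by auto
  ultimately show ?thesis
    using that by blast
qed

lemma ereal_less_sum_imp_real_minorants:
  fixes a :: "'a \<Rightarrow> ereal"
  assumes "finite A" and no_pinf: "\<And>i. i \<in> A \<Longrightarrow> a i \<noteq> \<infinity>" and c: "ereal c < (\<Sum>i\<in>A. a i)"
  obtains r where "\<And>i. i \<in> A \<Longrightarrow> ereal (r i) < a i" and "c < (\<Sum>i\<in>A. r i)"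
proof -
  have no_minf: "a i \<noteq> -\<infinity>" if i: "i \<in> A" for i
  proof
    assume "a i = -\<infinity>"
    moreover have "(\<Sum>j\<in>A. a j) = a i + (\<Sum>j\<in>A - {i}. a j)"
      using assms(1) i by (simp add: sum.remove)
    moreover have "(\<Sum>j\<in>A - {i}. a j) \<noteq> \<infinity>"
      using no_pinf by (simp add: sum_Pinfty)
    ultimately show False
      using c by (cases "\<Sum>j\<in>A - {i}. a j") auto
  qed
  define b where "b i = real_of_ereal (a i)" for i
  have ab: "a i = ereal (b i)" if "i \<in> A" for i
    using no_pinf[OF that] no_minf[OF that] by (cases "a i") (auto simp: b_def)
  then have "c < (\<Sum>i\<in>A. b i)"
    using c by simp
  define \<delta> where "\<delta> = ((\<Sum>i\<in>A. b i) - c) / (1 + card A)"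
  have \<delta>: "0 < \<delta>" "(1 + real (card A)) * \<delta> = (\<Sum>i\<in>A. b i) - c"
    using \<open>c < (\<Sum>i\<in>A. b i)\<close> unfolding \<delta>_def by simp_all
  have "real (card A) * \<delta> < (1 + real (card A)) * \<delta>"
    using \<delta>(1) by (intro mult_strict_right_mono) auto
  then have "c < (\<Sum>i\<in>A. b i - \<delta>)"
    unfolding \<delta>(2) by (simp add: sum_subtractf)
  moreover have "ereal (b i - \<delta>) < a i" if "i \<in> A" for i
    using \<delta>(1) ab[OF that] by simp
  ultimately show ?thesis
    by (intro that[of "\<lambda>i. b i - \<delta>"])
qed

lemma concave_erealD:
  fixes u :: "'a::real_vector \<Rightarrow> ereal"
  assumes "concave_ereal u" "ereal a \<le> u x" "ereal b \<le> u y" "0 \<le> m" "m \<le> 1"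
  shows "ereal ((1 - m) * a + m * b) \<le> u ((1 - m) *\<^sub>R x + m *\<^sub>R y)"
proof -
  have "(1 - m) *\<^sub>R (x, a) + m *\<^sub>R (y, b) \<in> {(x, r). ereal r \<le> u x}"
    using assms by (intro convexD[of "{(x, r). ereal r \<le> u x}"]) (auto simp: concave_ereal_def)
  then show ?thesis
    by simp
qed

lemma usc_le_Lim:
  assumes "usc u" "(f \<longlongrightarrow> y) F" "F \<noteq> bot" "eventually (\<lambda>x. c \<le> u (f x)) F"
  shows "c \<le> u y"
  using Lim_in_closed_set[of "{x. c \<le> u x}"] assms by (auto simp: usc_def)

lemma usc_concave_ray_ascent_transfer:
  fixes u :: "'a::real_normed_vector \<Rightarrow> ereal"
  assumes usc: "usc u" and concave: "concave_ereal u" and no_pinf: "\<And>y. u y \<noteq> \<infinity>"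
    and x: "x \<in> edom u" and ascent: "\<And>t. 0 < t \<Longrightarrow> u x \<le> u (x + t *\<^sub>R v)"
    and y: "y \<in> edom u" and t: "0 < t"
  shows "u y \<le> u (y + t *\<^sub>R v)"
proof -
  obtain a where a: "u y = ereal a"
    using y no_pinf[of y] by (cases "u y") (auto simp: edom_def)
  obtain b where b: "u x = ereal b"
    using x no_pinf[of x] by (cases "u x") (auto simp: edom_def)
  \<comment> \<open>\<open>p m\<close> lies on the segment from \<open>y\<close> to the far point \<open>x + (t / m) *\<^sub>R v\<close> of the ray,
    so concavity bounds \<open>u (p m)\<close> from below, while \<open>p m \<longrightarrow> y + t *\<^sub>R v\<close> as \<open>m \<longrightarrow> 0\<close>\<close>
  define p where "p m = y + t *\<^sub>R v + m *\<^sub>R (x - y)" for m :: real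
  have p_bound: "ereal ((1 - m) * a + m * b) \<le> u (p m)" if "0 < m" "m \<le> 1" for m
  proof -
    have "ereal b \<le> u (x + (t / m) *\<^sub>R v)"
      using ascent[of "t / m"] that t b by simp
    then have "ereal ((1 - m) * a + m * b) \<le> u ((1 - m) *\<^sub>R y + m *\<^sub>R (x + (t / m) *\<^sub>R v))"
      using a that by (intro concave_erealD[OF concave]) auto
    also have "(1 - m) *\<^sub>R y + m *\<^sub>R (x + (t / m) *\<^sub>R v) = p m"
      using that by (simp add: p_def algebra_simps)
    finally show ?thesis .
  qed
  have "c \<le> u (y + t *\<^sub>R v)" if "c < ereal a" for c
  proof (cases c)
    case (real c')
    have "((\<lambda>m. (1 - m) * a + m * b) \<longlongrightarrow> (1 - 0) * a + 0 * b) (at_right 0)"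
      by (intro tendsto_intros)
    then have "\<forall>\<^sub>F m in at_right 0. c' < (1 - m) * a + m * b"
      using that real by (intro order_tendstoD) auto
    moreover have "\<forall>\<^sub>F m in at_right (0::real). 0 < m \<and> m \<le> 1"
      by (auto simp: eventually_at_right_field intro: exI[of _ 1])
    ultimately have "\<forall>\<^sub>F m in at_right 0. c \<le> u (p m)"
    proof eventually_elim
      case (elim m)
      then show ?case
        using p_bound[of m] real by (auto intro: order_trans[rotated])
    qed
    moreover have "(p \<longlongrightarrow> y + t *\<^sub>R v + 0 *\<^sub>R (x - y)) (at_right 0)"
      unfolding p_def by (intro tendsto_intros)
    ultimately show ?thesis
      by (intro usc_le_Lim[OF usc, where F = "at_right 0"]) simp_all
  qed (use that in simp_all)
  then show ?thesis
    unfolding a by (rule dense_le)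
qed

lemma recession_nonneg_if_ray_ascent:
  fixes u :: "'a::real_normed_vector \<Rightarrow> ereal"
  assumes usc: "usc u" and concave: "concave_ereal u" and no_pinf: "\<And>y. u y \<noteq> \<infinity>"
    and x: "x \<in> edom u" and ascent: "\<And>t. 0 < t \<Longrightarrow> u x \<le> u (x + t *\<^sub>R v)"
  shows "0 \<le> recession u v"
proof -
  \<comment> \<open>\<open>recession\<close> is evaluated at this chosen point, to which the ascent is transported\<close>
  define xb where "xb = (SOME xb. xb \<in> edom u)"
  have xb: "xb \<in> edom u"
    unfolding xb_def using x by (rule someI)
  obtain a where a: "u xb = ereal a"
    using xb no_pinf[of xb] by (cases "u xb") (auto simp: edom_def)
  show ?thesis
    unfolding recession_def Let_def xb_def[symmetric]
  proof (rule INF_greatest)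
    fix t :: real
    assume "t \<in> {0<..}"
    then have t: "0 < t" by simp
    have le: "u xb \<le> u (xb + t *\<^sub>R v)"
      using usc_concave_ray_ascent_transfer[OF usc concave no_pinf x ascent xb t] .
    then obtain c where c: "u (xb + t *\<^sub>R v) = ereal c"
      using a no_pinf[of "xb + t *\<^sub>R v"] by (cases "u (xb + t *\<^sub>R v)") auto
    show "0 \<le> (u (xb + t *\<^sub>R v) - u xb) / ereal t"
      using le t by (simp add: a c)
  qed
qed

lemma numeraire_mono:
  fixes u :: "'a::real_vector \<Rightarrow> ereal"
  assumes mono_g: "\<And>y r. y \<in> edom u \<Longrightarrow> 0 < r \<Longrightarrow> u y < u (y + r *\<^sub>R g)" and "0 \<le> r"
  shows "u y \<le> u (y + r *\<^sub>R g)"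
proof (cases "y \<in> edom u \<and> 0 < r")
  case True
  then show ?thesis
    using mono_g by (simp add: less_imp_le)
next
  case False
  then show ?thesis
    using \<open>0 \<le> r\<close> by (auto simp: edom_def)
qed

definition acceptance_set :: "('a::real_vector \<Rightarrow> ereal) \<Rightarrow> 'a \<Rightarrow> 'a set" where
  "acceptance_set u x0 = {z. u x0 \<le> u (x0 + z)}"

lemma zero_in_acceptance_set [simp]: "0 \<in> acceptance_set u x0"
  by (simp add: acceptance_set_def)

lemma closed_acceptance_set:
  fixes u :: "'a::real_normed_vector \<Rightarrow> ereal"
  assumes "usc u"
  shows "closed (acceptance_set u x0)"
proof -
  have "closed ((\<lambda>z. x0 + z) -` {y. u x0 \<le> u y})"
    using assms unfolding usc_def by (intro continuous_closed_vimage continuous_intros) auto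
  moreover have "acceptance_set u x0 = (\<lambda>z. x0 + z) -` {y. u x0 \<le> u y}"
    by (auto simp: acceptance_set_def)
  ultimately show ?thesis
    by simp
qed

lemma convex_acceptance_set:
  fixes u :: "'a::real_vector \<Rightarrow> ereal"
  assumes concave: "concave_ereal u" and "u x0 = ereal c"
  shows "convex (acceptance_set u x0)"
proof (rule convexI)
  fix a b :: 'a and m1 m2 :: real
  assume ab: "a \<in> acceptance_set u x0" "b \<in> acceptance_set u x0"
    and m: "0 \<le> m1" "0 \<le> m2" "m1 + m2 = 1"
  have "u x0 = ereal ((1 - m2) * c + m2 * c)"
    using assms by (simp add: algebra_simps)
  also have "\<dots> \<le> u ((1 - m2) *\<^sub>R (x0 + a) + m2 *\<^sub>R (x0 + b))"
    using ab m assms by (intro concave_erealD[OF concave]) (auto simp: acceptance_set_def)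
  also have "(1 - m2) *\<^sub>R (x0 + a) + m2 *\<^sub>R (x0 + b) = x0 + (m1 *\<^sub>R a + m2 *\<^sub>R b)"
    using m by (simp add: algebra_simps flip: scaleR_add_left)
  finally show "m1 *\<^sub>R a + m2 *\<^sub>R b \<in> acceptance_set u x0"
    by (simp add: acceptance_set_def)
qed

lemma neg_numeraire_not_acceptable:
  fixes u :: "'a::real_vector \<Rightarrow> ereal"
  assumes mono_g: "\<And>y r. y \<in> edom u \<Longrightarrow> 0 < r \<Longrightarrow> u y < u (y + r *\<^sub>R g)"
    and "x0 \<in> edom u" and "0 < r"
  shows "- (r *\<^sub>R g) \<notin> acceptance_set u x0"
proof
  assume "- (r *\<^sub>R g) \<in> acceptance_set u x0"
  then have le: "u x0 \<le> u (x0 - r *\<^sub>R g)"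
    by (simp add: acceptance_set_def)
  then have "x0 - r *\<^sub>R g \<in> edom u"
    using \<open>x0 \<in> edom u\<close> by (auto simp: edom_def)
  from mono_g[OF this \<open>0 < r\<close>] le show False
    by simp
qed

lemma indiff_price_ge:
  assumes "x - r *\<^sub>R g \<in> acceptance_set u x0"
  shows "ereal r \<le> indiff_price u x0 g x"
  unfolding indiff_price_def
  using assms by (intro SUP_upper) (simp add: acceptance_set_def algebra_simps)

lemma less_indiff_price_obtain:
  assumes "ereal c < indiff_price u x0 g x"
  obtains r where "c < r" and "x - r *\<^sub>R g \<in> acceptance_set u x0"
  using assms unfolding indiff_price_def less_SUP_iff
  by (auto simp: acceptance_set_def algebra_simps)

lemma indiff_price_PInf_if_not_edom:
  assumes "x0 \<notin> edom u"
  shows "indiff_price u x0 g x = \<infinity>"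
proof (rule ereal_top)
  fix B :: real
  show "ereal B \<le> indiff_price u x0 g x"
    using assms by (intro indiff_price_ge) (simp add: acceptance_set_def edom_def)
qed

text \<open>\<open>s\<close> is the amount of numeraire released by the acceptable trades \<open>z\<close>.\<close>

definition acceptable_trades ::
    "('i::finite \<Rightarrow> 'a::real_vector \<Rightarrow> ereal) \<Rightarrow> ('i \<Rightarrow> 'a) \<Rightarrow> 'a \<Rightarrow> (('a^'i) \<times> real) set" where
  "acceptable_trades u x0 g = {(z, s). (\<forall>i. z $ i \<in> acceptance_set (u i) (x0 i)) \<and>
     (\<Sum>i\<in>UNIV. z $ i) + s *\<^sub>R g = 0 \<and> 0 \<le> s}"

lemma zero_in_acceptable_trades: "0 \<in> acceptable_trades u x0 g"
  by (simp add: acceptable_trades_def zero_prod_def)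

lemma closed_acceptable_trades:
  fixes u :: "'i::finite \<Rightarrow> 'a::real_normed_vector \<Rightarrow> ereal"
  assumes "\<And>i. usc (u i)"
  shows "closed (acceptable_trades u x0 g)"
proof -
  have "acceptable_trades u x0 g =
      (\<Inter>i. (\<lambda>p. fst p $ i) -` acceptance_set (u i) (x0 i)) \<inter>
      {p. (\<Sum>i\<in>UNIV. fst p $ i) + snd p *\<^sub>R g = 0} \<inter> {p. 0 \<le> snd p}"
    by (auto simp: acceptable_trades_def)
  moreover have "closed ((\<lambda>p :: ('a^'i) \<times> real. fst p $ i) -` acceptance_set (u i) (x0 i))" for i
    using closed_acceptance_set[OF assms] by (intro continuous_closed_vimage continuous_intros)
  moreover have "closed {p :: ('a^'i) \<times> real. (\<Sum>i\<in>UNIV. fst p $ i) + snd p *\<^sub>R g = 0}"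
    by (intro closed_Collect_eq continuous_intros)
  moreover have "closed {p :: ('a^'i) \<times> real. 0 \<le> snd p}"
    by (intro closed_Collect_le continuous_intros)
  ultimately show ?thesis
    by (simp add: closed_Int closed_INT)
qed

lemma convex_acceptable_trades:
  fixes u :: "'i::finite \<Rightarrow> 'a::real_vector \<Rightarrow> ereal"
  assumes "\<And>i. concave_ereal (u i)" and "\<And>i. u i (x0 i) \<noteq> \<infinity>"
    and "\<And>i. x0 i \<in> edom (u i)"
  shows "convex (acceptable_trades u x0 g)"
proof (rule convexI)
  fix p q :: "('a^'i) \<times> real" and m1 m2 :: real
  assume p: "p \<in> acceptable_trades u x0 g" and q: "q \<in> acceptable_trades u x0 g"
    and m: "0 \<le> m1" "0 \<le> m2" "m1 + m2 = 1"
  have "convex (acceptance_set (u i) (x0 i))" for i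
    using assms(2,3)[of i] by (cases "u i (x0 i)") (auto simp: edom_def intro: convex_acceptance_set[OF assms(1)])
  then have "(m1 *\<^sub>R fst p + m2 *\<^sub>R fst q) $ i \<in> acceptance_set (u i) (x0 i)" for i
    using p q m by (cases p, cases q) (auto simp: acceptable_trades_def intro: convexD)
  moreover have "(\<Sum>i\<in>UNIV. (m1 *\<^sub>R fst p + m2 *\<^sub>R fst q) $ i) + (m1 * snd p + m2 * snd q) *\<^sub>R g =
      m1 *\<^sub>R ((\<Sum>i\<in>UNIV. fst p $ i) + snd p *\<^sub>R g) + m2 *\<^sub>R ((\<Sum>i\<in>UNIV. fst q $ i) + snd q *\<^sub>R g)"
    by (simp add: sum.distrib scaleR_sum_right algebra_simps)
  then have "(\<Sum>i\<in>UNIV. (m1 *\<^sub>R fst p + m2 *\<^sub>R fst q) $ i) + (m1 * snd p + m2 * snd q) *\<^sub>R g = 0"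
    using p q by (cases p, cases q) (simp add: acceptable_trades_def)
  moreover have "0 \<le> m1 * snd p + m2 * snd q"
    using p q m by (cases p, cases q) (auto simp: acceptable_trades_def)
  ultimately show "m1 *\<^sub>R p + m2 *\<^sub>R q \<in> acceptable_trades u x0 g"
    by (cases p, cases q) (simp add: acceptable_trades_def)
qed

lemma acceptable_trades_ray_eq_0:
  fixes u :: "'i::finite \<Rightarrow> 'a::real_normed_vector \<Rightarrow> ereal"
  assumes no_pinf: "\<And>i y. u i y \<noteq> \<infinity>" and usc: "\<And>i. usc (u i)"
    and concave: "\<And>i. concave_ereal (u i)"
    and mono_g: "\<And>i y r. y \<in> edom (u i) \<Longrightarrow> 0 < r \<Longrightarrow> u i y < u i (y + r *\<^sub>R g)"
    and recess: "\<And>x :: 'i \<Rightarrow> 'a.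
        (\<forall>i. recession (u i) (x i) \<ge> 0) \<Longrightarrow> (\<Sum>i\<in>UNIV. x i) = 0 \<Longrightarrow> x = (\<lambda>i. 0)"
    and x0: "\<And>i. x0 i \<in> edom (u i)"
    and ray: "\<And>t. 0 \<le> t \<Longrightarrow> t *\<^sub>R p \<in> acceptable_trades u x0 g"
  shows "p = 0"
proof -
  obtain z s where p: "p = (z, s)"
    by fastforce
  have acc: "t *\<^sub>R z $ i \<in> acceptance_set (u i) (x0 i)" if "0 \<le> t" for t i
    using ray[OF that] by (simp add: p acceptable_trades_def)
  have clear: "(\<Sum>i\<in>UNIV. z $ i) + s *\<^sub>R g = 0" and "0 \<le> s"
    using ray[of 1] by (simp_all add: p acceptable_trades_def)
  \<comment> \<open>the released numeraire is shared equally\<close>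
  define d where "d i = z $ i + (s / CARD('i)) *\<^sub>R g" for i
  have "(\<Sum>i\<in>UNIV. d i) = 0"
    using clear by (simp add: d_def sum.distrib sum_constant_scaleR)
  moreover have "0 \<le> recession (u i) (d i)" for i
  proof (rule recession_nonneg_if_ray_ascent[OF usc concave no_pinf x0])
    fix t :: real
    assume "0 < t"
    then have "u i (x0 i) \<le> u i (x0 i + t *\<^sub>R z $ i)"
      using acc[of t i] by (simp add: acceptance_set_def)
    also have "\<dots> \<le> u i (x0 i + t *\<^sub>R z $ i + (t * (s / CARD('i))) *\<^sub>R g)"
      using \<open>0 < t\<close> \<open>0 \<le> s\<close>
      by (intro numeraire_mono[where u = "u i", OF mono_g]) (auto intro!: mult_nonneg_nonneg divide_nonneg_nonneg)
    finally show "u i (x0 i) \<le> u i (x0 i + t *\<^sub>R d i)"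
      by (simp add: d_def algebra_simps)
  qed
  ultimately have d0: "d = (\<lambda>i. 0)"
    using recess by blast
  then have z: "z $ i = - ((s / CARD('i)) *\<^sub>R g)" for i
  proof -
    have "z $ i + (s / CARD('i)) *\<^sub>R g = 0"
      using d0 unfolding d_def by meson
    then show ?thesis
      by (simp add: eq_neg_iff_add_eq_0)
  qed
  have "s = 0"
  proof (rule ccontr)
    assume "s \<noteq> 0"
    then have "0 < s / CARD('i)"
      using \<open>0 \<le> s\<close> by simp
    then show False
      using acc[of 1] z neg_numeraire_not_acceptable[OF mono_g x0] by auto
  qed
  then show "p = 0"
    using z by (simp add: p vec_eq_iff zero_prod_def)
qed

lemma bounded_acceptable_trades:
  fixes u :: "'i::finite \<Rightarrow> 'a::euclidean_space \<Rightarrow> ereal"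
  assumes no_pinf: "\<And>i y. u i y \<noteq> \<infinity>" and usc: "\<And>i. usc (u i)"
    and concave: "\<And>i. concave_ereal (u i)"
    and mono_g: "\<And>i y r. y \<in> edom (u i) \<Longrightarrow> 0 < r \<Longrightarrow> u i y < u i (y + r *\<^sub>R g)"
    and recess: "\<And>x :: 'i \<Rightarrow> 'a.
        (\<forall>i. recession (u i) (x i) \<ge> 0) \<Longrightarrow> (\<Sum>i\<in>UNIV. x i) = 0 \<Longrightarrow> x = (\<lambda>i. 0)"
    and x0: "\<And>i. x0 i \<in> edom (u i)"
  shows "bounded (acceptable_trades u x0 g)"
proof (rule ccontr)
  assume "\<not> bounded (acceptable_trades u x0 g)"
  then obtain d where "d \<noteq> 0" and ray: "\<And>t. 0 \<le> t \<Longrightarrow> t *\<^sub>R d \<in> acceptable_trades u x0 g"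
    by (rule unbounded_closed_convex_contains_ray[OF closed_acceptable_trades[OF usc]
        convex_acceptable_trades[OF concave no_pinf x0] zero_in_acceptable_trades]) blast
  have "d = 0"
    by (rule acceptable_trades_ray_eq_0[OF no_pinf usc concave mono_g recess x0 ray])
  with \<open>d \<noteq> 0\<close> show False ..
qed

lemma sum_indiff_price_ge_surplus:
  fixes u :: "'i::finite \<Rightarrow> 'a::real_vector \<Rightarrow> ereal"
  assumes "(z, s) \<in> acceptable_trades u x0 g"
  obtains x where "(\<Sum>i\<in>UNIV. x i) = 0"
    and "ereal s \<le> (\<Sum>i\<in>UNIV. indiff_price (u i) (x0 i) g (x i))"
proof
  define x where "x i = z $ i + (s / CARD('i)) *\<^sub>R g" for i
  show "(\<Sum>i\<in>UNIV. x i) = 0"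
    using assms by (simp add: x_def acceptable_trades_def sum.distrib sum_constant_scaleR)
  have "ereal s = (\<Sum>i::'i\<in>UNIV. ereal (s / CARD('i)))"
    by simp
  also have "\<dots> \<le> (\<Sum>i\<in>UNIV. indiff_price (u i) (x0 i) g (x i))"
    using assms by (intro sum_mono indiff_price_ge) (simp add: x_def acceptable_trades_def)
  finally show "ereal s \<le> (\<Sum>i\<in>UNIV. indiff_price (u i) (x0 i) g (x i))" .
qed

lemma acceptable_trade_above_sum_indiff_price:
  fixes u :: "'i::finite \<Rightarrow> 'a::real_vector \<Rightarrow> ereal"
  assumes y: "(\<Sum>i\<in>UNIV. y i) = 0"
    and no_pinf: "\<And>i. indiff_price (u i) (x0 i) g (y i) \<noteq> \<infinity>"
    and "0 \<le> c" and c: "ereal c < (\<Sum>i\<in>UNIV. indiff_price (u i) (x0 i) g (y i))"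
  obtains p where "p \<in> acceptable_trades u x0 g" and "c < snd p"
proof -
  obtain r where r: "\<And>i. ereal (r i) < indiff_price (u i) (x0 i) g (y i)" and "c < (\<Sum>i\<in>UNIV. r i)"
    using ereal_less_sum_imp_real_minorants[of UNIV, OF _ no_pinf c] by auto
  have "\<exists>r'. r i < r' \<and> y i - r' *\<^sub>R g \<in> acceptance_set (u i) (x0 i)" for i
    using less_indiff_price_obtain[OF r[of i]] by blast
  then obtain r' where r': "\<And>i. r i < r' i" "\<And>i. y i - r' i *\<^sub>R g \<in> acceptance_set (u i) (x0 i)"
    by metis
  have "c < (\<Sum>i\<in>UNIV. r' i)"
    using \<open>c < (\<Sum>i\<in>UNIV. r i)\<close> sum_strict_mono[of UNIV r r'] r'(1) by fastforce
  moreover have "(\<Sum>i\<in>UNIV. y i - r' i *\<^sub>R g) + (\<Sum>i\<in>UNIV. r' i) *\<^sub>R g = 0"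
    using y by (simp add: sum_subtractf scaleR_sum_left)
  ultimately have "((\<chi> i. y i - r' i *\<^sub>R g), \<Sum>i\<in>UNIV. r' i) \<in> acceptable_trades u x0 g"
    using r'(2) \<open>0 \<le> c\<close> by (simp add: acceptable_trades_def)
  then show ?thesis
    using \<open>c < (\<Sum>i\<in>UNIV. r' i)\<close> that by fastforce
qed

lemma sum_indiff_price_le_surplus_bound:
  fixes u :: "'i::finite \<Rightarrow> 'a::real_vector \<Rightarrow> ereal"
  assumes bound: "\<And>q. q \<in> acceptable_trades u x0 g \<Longrightarrow> snd q \<le> S"
    and y: "(\<Sum>i\<in>UNIV. y i) = 0"
    and finite_sum: "(\<Sum>i\<in>UNIV. indiff_price (u i) (x0 i) g (y i)) \<noteq> \<infinity>"
  shows "(\<Sum>i\<in>UNIV. indiff_price (u i) (x0 i) g (y i)) \<le> ereal S"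
proof (rule ccontr)
  assume "\<not> ?thesis"
  then have "ereal S < (\<Sum>i\<in>UNIV. indiff_price (u i) (x0 i) g (y i))"
    by simp
  moreover have "indiff_price (u i) (x0 i) g (y i) \<noteq> \<infinity>" for i
    using finite_sum by (auto simp: sum_Pinfty)
  moreover have "0 \<le> S"
    using bound[OF zero_in_acceptable_trades] by simp
  ultimately obtain q where "q \<in> acceptable_trades u x0 g" and "S < snd q"
    using acceptable_trade_above_sum_indiff_price[OF y] by blast
  with bound show False
    by fastforce
qed

lemma acceptable_trades_max_surplus:
  fixes u :: "'i::finite \<Rightarrow> 'a::euclidean_space \<Rightarrow> ereal"
  assumes no_pinf: "\<And>i y. u i y \<noteq> \<infinity>" and usc: "\<And>i. usc (u i)"
    and concave: "\<And>i. concave_ereal (u i)"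
    and mono_g: "\<And>i y r. y \<in> edom (u i) \<Longrightarrow> 0 < r \<Longrightarrow> u i y < u i (y + r *\<^sub>R g)"
    and recess: "\<And>x :: 'i \<Rightarrow> 'a.
        (\<forall>i. recession (u i) (x i) \<ge> 0) \<Longrightarrow> (\<Sum>i\<in>UNIV. x i) = 0 \<Longrightarrow> x = (\<lambda>i. 0)"
    and x0: "\<And>i. x0 i \<in> edom (u i)"
  obtains p where "p \<in> acceptable_trades u x0 g" and "\<And>q. q \<in> acceptable_trades u x0 g \<Longrightarrow> snd q \<le> snd p"
proof -
  have "bounded (acceptable_trades u x0 g)"
    by (rule bounded_acceptable_trades[OF no_pinf usc concave mono_g recess x0])
  then have "compact (acceptable_trades u x0 g)"
    using closed_acceptable_trades[OF usc] by (simp add: compact_eq_bounded_closed)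
  then have "\<exists>p\<in>acceptable_trades u x0 g. \<forall>q\<in>acceptable_trades u x0 g. snd q \<le> snd p"
    using zero_in_acceptable_trades by (intro continuous_attains_sup continuous_intros) blast+
  then show ?thesis
    using that by auto
qed

lemma edom_if_sum_indiff_price_finite:
  fixes u :: "'i::finite \<Rightarrow> 'a::real_vector \<Rightarrow> ereal"
  assumes "(\<Sum>i\<in>UNIV. indiff_price (u i) (x0 i) g 0) \<noteq> \<infinity>"
  shows "x0 i \<in> edom (u i)"
proof (rule ccontr)
  assume "x0 i \<notin> edom (u i)"
  then have "indiff_price (u i) (x0 i) g 0 = \<infinity>"
    by (rule indiff_price_PInf_if_not_edom)
  with assms show False
    by (auto simp: sum_Pinfty)
qed

theorem theorem4p3:
  fixes u :: "'i::finite \<Rightarrow> (real^'j::finite) \<Rightarrow> ereal"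
    and x0 :: "'i \<Rightarrow> real^'j"
    and g :: "real^'j"
  assumes no_pinf: "\<And>i y. u i y \<noteq> \<infinity>"
    and usc: "\<And>i. usc (u i)"
    and concave: "\<And>i. concave_ereal (u i)"
    and mono_g: "\<And>i y r. y \<in> edom (u i) \<Longrightarrow> r > 0 \<Longrightarrow> u i (y + r *\<^sub>R g) > u i y"
    and recess: "\<And>x :: 'i \<Rightarrow> real^'j.
        (\<forall>i. recession (u i) (x i) \<ge> 0) \<Longrightarrow> (\<Sum>i\<in>UNIV. x i) = 0 \<Longrightarrow> x = (\<lambda>i. 0)"
  shows "\<exists>x :: 'i \<Rightarrow> real^'j. (\<Sum>i\<in>UNIV. x i) = 0 \<and>
           (\<forall>y :: 'i \<Rightarrow> real^'j. (\<Sum>i\<in>UNIV. y i) = 0 \<longrightarrow>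
              (\<Sum>i\<in>UNIV. indiff_price (u i) (x0 i) g (y i))
                \<le> (\<Sum>i\<in>UNIV. indiff_price (u i) (x0 i) g (x i)))"
proof (cases "\<exists>y. (\<Sum>i\<in>UNIV. y i) = 0 \<and> (\<Sum>i\<in>UNIV. indiff_price (u i) (x0 i) g (y i)) = \<infinity>")
  case True
  then obtain y where "(\<Sum>i\<in>UNIV. y i) = 0" and "(\<Sum>i\<in>UNIV. indiff_price (u i) (x0 i) g (y i)) = \<infinity>"
    by blast
  then show ?thesis
    by (intro exI[of _ y]) simp
next
  case False
  then have x0: "x0 i \<in> edom (u i)" for i
    by (intro edom_if_sum_indiff_price_finite[of u x0 g]) auto
  obtain p where p: "p \<in> acceptable_trades u x0 g"
    and p_max: "\<And>q. q \<in> acceptable_trades u x0 g \<Longrightarrow> snd q \<le> snd p"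
    using acceptable_trades_max_surplus[of u g x0, OF no_pinf usc concave mono_g recess x0] by blast
  from p have "(fst p, snd p) \<in> acceptable_trades u x0 g"
    by simp
  then obtain x where x: "(\<Sum>i\<in>UNIV. x i) = 0"
    and surplus: "ereal (snd p) \<le> (\<Sum>i\<in>UNIV. indiff_price (u i) (x0 i) g (x i))"
    by (rule sum_indiff_price_ge_surplus)
  show ?thesis
  proof (intro exI[of _ x] conjI allI impI x)
    fix y :: "'i \<Rightarrow> real^'j"
    assume y: "(\<Sum>i\<in>UNIV. y i) = 0"
    with False have "(\<Sum>i\<in>UNIV. indiff_price (u i) (x0 i) g (y i)) \<le> ereal (snd p)"
      by (intro sum_indiff_price_le_surplus_bound[OF p_max]) auto
    also note surplus
    finally show "(\<Sum>i\<in>UNIV. indiff_price (u i) (x0 i) g (y i))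
        \<le> (\<Sum>i\<in>UNIV. indiff_price (u i) (x0 i) g (x i))" .
  qed
qed

end
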